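(* Let $n\ge3$ and $x^\Lambda\partial_k\in\mathcal{B}$. Then $\mathrm{WD}(x^\Lambda\partial_k)\ge n-k$, with equality if and only if $x^\Lambda\partial_k=x_1^{\lambda_1}\partial_k$. Moreover, if $\mathrm{lev}_i(x^\Lambda\partial_k)\le i$ for some integer $i\ge-1$, then $\mathrm{WD}(x^\Lambda\partial_k)\le n-1$, with equality if and only if $x^\Lambda\partial_k=\partial_1$.
   Context: Fix an integer $n\ge 3$. A partition is a sequence $\Lambda=(\lambda_j)_{j\ge1}$ of non-negative integers with finite support; $\mathrm{wt}(\Lambda)=\sum_j j\lambda_j$; $\mathrm{Part}(k)$ is the set of partitions with $\lambda_j=0$ for $j>k$. Write $x^\Lambda=\prod_j x_j^{\lambda_j}$, $\deg(x^\Lambda)=\sum_j\lambda_j$. $\mathcal{B}=\{x^\Lambda\partial_k : 1\le k\le n,\ \Lambda\in\mathrm{Part}(k-1)\}$. For an integer $i\ge-1$, let $r_i\in\{1,\dots,n-1\}$ with $i\equiv r_i\pmod{n-1}$ and $h_i=\lfloor (i-1)/(n-1)\rfloor+1$. Define $\mathrm{WD}(x^\Lambda\partial_k)=\mathrm{wt}(\Lambda)-\deg(x^\Lambda)+n-k$ and $\mathrm{lev}_i(x^\Lambda\partial_k)=h_i\,\mathrm{WD}(x^\Lambda\partial_k)+\deg(x^\Lambda)-1$. *)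

theory Defs
  imports Main
begin

text \<open>A partition is a sequence (lambda_j) indexed by j >= 1 of naturals with finite support.
  We represent it as a function nat => nat and, by convention, require the (unused) entry at
  index 0 to be 0.\<close>

definition is_partition :: "(nat \<Rightarrow> nat) \<Rightarrow> bool" where
  "is_partition L \<longleftrightarrow> L 0 = 0 \<and> finite {j. L j \<noteq> 0}"

definition Part :: "nat \<Rightarrow> (nat \<Rightarrow> nat) set" where
  "Part k = {L. is_partition L \<and> (\<forall>j>k. L j = 0)}"

definition wt :: "(nat \<Rightarrow> nat) \<Rightarrow> nat" where
  "wt L = (\<Sum>j\<in>{j. L j \<noteq> 0}. j * L j)"

definition mdeg :: "(nat \<Rightarrow> nat) \<Rightarrow> nat" where
  "mdeg L = (\<Sum>j\<in>{j. L j \<noteq> 0}. L j)"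

text \<open>The monomial vector field x^L d_k is represented by the pair (L, k).\<close>

definition inB :: "nat \<Rightarrow> (nat \<Rightarrow> nat) \<Rightarrow> nat \<Rightarrow> bool" where
  "inB n L k \<longleftrightarrow> 1 \<le> k \<and> k \<le> n \<and> L \<in> Part (k - 1)"

definition WD :: "nat \<Rightarrow> (nat \<Rightarrow> nat) \<Rightarrow> nat \<Rightarrow> int" where
  "WD n L k = int (wt L) - int (mdeg L) + int n - int k"

definition hh :: "nat \<Rightarrow> int \<Rightarrow> int" where
  "hh n i = (i - 1) div (int n - 1) + 1"

definition lev :: "nat \<Rightarrow> int \<Rightarrow> (nat \<Rightarrow> nat) \<Rightarrow> nat \<Rightarrow> int" where
  "lev n i L k = hh n i * WD n L k + int (mdeg L) - 1"

end

theory Submission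
  imports Defs
begin

text \<open>Since \<open>wt \<Lambda> - deg \<Lambda> = \<Sum>\<^sub>j (j - 1) \<lambda>\<^sub>j\<close>, the first claim is immediate. For the second, write
  \<open>i \<le> h\<^sub>i (n - 1)\<close> with \<open>h\<^sub>i \<ge> 0\<close>: if \<open>WD \<ge> n - 1\<close> then \<open>lev\<^sub>i \<ge> i + deg - 1\<close>, so \<open>lev\<^sub>i \<le> i\<close>
  forces \<open>deg \<le> 1\<close>. Then either \<open>\<Lambda> = 0\<close> and \<open>WD = n - k\<close>, or \<open>x\<^sup>\<Lambda> = x\<^sub>j\<close> with \<open>j < k\<close> and
  \<open>WD = n - 1 - (k - j) < n - 1\<close>.\<close>

lemma wt_eq_mdeg_plus:
  assumes "is_partition L"
  shows "wt L = mdeg L + (\<Sum>j\<in>{j. L j \<noteq> 0}. (j - 1) * L j)"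
proof -
  have "L 0 = 0" using assms by (simp add: is_partition_def)
  then have "j * L j = L j + (j - 1) * L j" if "L j \<noteq> 0" for j
    using that by (cases j) auto
  then show ?thesis
    unfolding wt_def mdeg_def sum.distrib[symmetric] by (auto intro: sum.cong)
qed

lemma mdeg_le_wt: "is_partition L \<Longrightarrow> mdeg L \<le> wt L"
  by (simp add: wt_eq_mdeg_plus)

lemma mdeg_eq_wt_iff:
  assumes "is_partition L"
  shows "mdeg L = wt L \<longleftrightarrow> (\<forall>j\<ge>2. L j = 0)"
proof -
  have fin: "finite {j. L j \<noteq> 0}" and "L 0 = 0"
    using assms by (auto simp: is_partition_def)
  then have "(j - 1) * L j = 0 \<longleftrightarrow> (2 \<le> j \<longrightarrow> L j = 0)" for j
    by (cases j) auto
  then have "(\<Sum>j\<in>{j. L j \<noteq> 0}. (j - 1) * L j) = 0 \<longleftrightarrow> (\<forall>j\<ge>2. L j = 0)"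
    using fin by (auto simp only: sum_eq_0_iff mem_Collect_eq)
  then show ?thesis
    by (simp add: wt_eq_mdeg_plus[OF assms])
qed

lemma mdeg_eq_0_iff: "is_partition L \<Longrightarrow> mdeg L = 0 \<longleftrightarrow> (\<forall>j. L j = 0)"
  by (auto simp: is_partition_def mdeg_def)

lemma wt_le_mult_mdeg:
  assumes "L \<in> Part m"
  shows "wt L \<le> m * mdeg L"
proof -
  have "j \<le> m" if "L j \<noteq> 0" for j
    using assms that by (auto simp: Part_def not_less[symmetric])
  then have "wt L \<le> (\<Sum>j\<in>{j. L j \<noteq> 0}. m * L j)"
    unfolding wt_def by (intro sum_mono) simp
  also have "\<dots> = m * mdeg L"
    by (simp add: mdeg_def sum_distrib_left)
  finally show ?thesis .
qed

lemma WD_zero_1: "WD n (\<lambda>_. 0) 1 = int n - 1"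
  by (simp add: WD_def wt_def mdeg_def)

lemma WD_ge:
  assumes "inB n L k"
  shows "int n - int k \<le> WD n L k"
  using assms mdeg_le_wt by (auto simp: inB_def Part_def WD_def)

lemma WD_eq_iff:
  assumes "inB n L k"
  shows "WD n L k = int n - int k \<longleftrightarrow> (\<forall>j\<ge>2. L j = 0)"
  using assms mdeg_eq_wt_iff[symmetric] by (auto simp: inB_def Part_def WD_def)

lemma WD_of_mdeg_le_1:
  assumes "inB n L k" and "mdeg L \<le> 1"
  shows "WD n L k \<le> int n - 1 \<and> (WD n L k = int n - 1 \<longleftrightarrow> k = 1 \<and> (\<forall>j. L j = 0))"
proof -
  have k: "1 \<le> k" and P: "L \<in> Part (k - 1)" and "is_partition L"
    using assms(1) by (auto simp: inB_def Part_def)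
  consider "mdeg L = 0" | "mdeg L = 1" using assms(2) by linarith
  then show ?thesis
  proof cases
    case 1
    then have "\<forall>j. L j = 0" using mdeg_eq_0_iff \<open>is_partition L\<close> by blast
    with 1 have "wt L = 0" by (simp add: wt_def)
    with 1 \<open>\<forall>j. L j = 0\<close> k show ?thesis by (simp add: WD_def)
  next
    case 2
    then have "wt L \<le> k - 1" using wt_le_mult_mdeg[OF P] by simp
    with 2 k show ?thesis by (auto simp: WD_def mdeg_eq_0_iff[symmetric] \<open>is_partition L\<close>)
  qed
qed

lemma hh_nonneg:
  assumes "n \<ge> 2" and "2 - int n \<le> i"
  shows "0 \<le> hh n i"
proof -
  define m where "m = int n - 1"
  have "m > 0" using assms(1) by (simp add: m_def)
  then have "-1 = (- m) div m" by (simp add: zdiv_zminus1_eq_if)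
  also have "\<dots> \<le> (i - 1) div m"
    using assms by (intro zdiv_mono1) (auto simp: m_def)
  finally show ?thesis by (simp add: hh_def m_def)
qed

lemma le_hh_mult:
  assumes "n \<ge> 2"
  shows "i \<le> hh n i * (int n - 1)"
proof -
  have "(i - 1) mod (int n - 1) < int n - 1"
    using assms by simp
  then show ?thesis
    using div_mult_mod_eq[of "i - 1" "int n - 1"] by (simp add: hh_def algebra_simps)
qed

lemma lev_ge_of_WD_ge:
  assumes "n \<ge> 2" and "0 \<le> hh n i" and "int n - 1 \<le> WD n L k"
  shows "i + int (mdeg L) - 1 \<le> lev n i L k"
proof -
  have "i \<le> hh n i * (int n - 1)" using le_hh_mult[OF assms(1)] .
  also have "\<dots> \<le> hh n i * WD n L k" using assms(3,2) by (rule mult_left_mono)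
  finally show ?thesis by (simp add: lev_def)
qed

theorem lemma2p2:
  fixes n k :: nat and L :: "nat \<Rightarrow> nat"
  assumes "n \<ge> 3" and "inB n L k"
  shows "WD n L k \<ge> int n - int k
    \<and> (WD n L k = int n - int k \<longleftrightarrow> (\<forall>j\<ge>2. L j = 0))
    \<and> (\<forall>i::int. i \<ge> -1 \<and> lev n i L k \<le> i \<longrightarrow>
          WD n L k \<le> int n - 1
          \<and> (WD n L k = int n - 1 \<longleftrightarrow> (k = 1 \<and> (\<forall>j. L j = 0))))"
proof -
  have "WD n L k \<le> int n - 1 \<and> (WD n L k = int n - 1 \<longleftrightarrow> k = 1 \<and> (\<forall>j. L j = 0))"
    if i: "i \<ge> -1" "lev n i L k \<le> i" for i :: int
  proof (cases "WD n L k < int n - 1")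
    case True
    have "\<not> (k = 1 \<and> (\<forall>j. L j = 0))"
    proof
      assume "k = 1 \<and> (\<forall>j. L j = 0)"
      then have "k = 1" "L = (\<lambda>_. 0)" by auto
      with True WD_zero_1 show False by simp
    qed
    with True show ?thesis by simp
  next
    case False
    have "0 \<le> hh n i" using assms(1) i by (intro hh_nonneg) auto
    with False assms(1) have "i + int (mdeg L) - 1 \<le> lev n i L k"
      by (intro lev_ge_of_WD_ge) auto
    with i have "mdeg L \<le> 1" by linarith
    with assms(2) show ?thesis by (rule WD_of_mdeg_le_1)
  qed
  with assms(2) WD_ge WD_eq_iff show ?thesis by blast
qed

end
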